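(* Let $\lambda$ be a nonzero real number. For every integer $n\ge0$, \[ \int_{0}^{\infty}e^{-2x}\,\mathrm{bel}_{n,\lambda}(-x)\,dx=\frac{\beta_{n+1,\lambda}-2^{n+1}\beta_{n+1,\frac{\lambda}{2}}}{n+1}. \]
   Context: For nonzero real $\lambda$, $e_\lambda(t)=(1+\lambda t)^{1/\lambda}$. The partially degenerate Bell polynomials $\mathrm{bel}_{n,\lambda}(x)$ are defined by $e^{x(e_{\lambda}(t)-1)}=\sum_{n=0}^{\infty}\mathrm{bel}_{n,\lambda}(x)\frac{t^{n}}{n!}$. The degenerate Bernoulli numbers $\beta_{n,\mu}$ (for nonzero real $\mu$) are defined by $\frac{t}{e_{\mu}(t)-1}=\sum_{n=0}^{\infty}\beta_{n,\mu}\frac{t^{n}}{n!}$, with $e_\mu(t)=(1+\mu t)^{1/\mu}$; here $\mu=\lambda$ or $\mu=\lambda/2$. *)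

theory Defs
  imports "HOL-Analysis.Analysis" "HOL-Computational_Algebra.Formal_Power_Series"
begin

text \<open>Degenerate exponential e_lambda(t) = (1 + lambda t)^(1/lambda), as a formal power series
  in t: the binomial series (1+X)^(1/lambda) composed with lambda X.\<close>
definition deg_exp_fps :: "real \<Rightarrow> real fps" where
  "deg_exp_fps l = fps_binomial (1 / l) oo (fps_const l * fps_X)"

definition deg_bell :: "nat \<Rightarrow> real \<Rightarrow> real \<Rightarrow> real" where
  "deg_bell n l x = fact n * fps_nth (fps_exp x oo (deg_exp_fps l - 1)) n"

definition deg_bernoulli :: "nat \<Rightarrow> real \<Rightarrow> real" where
  "deg_bernoulli n m = fact n * fps_nth (fps_X / (deg_exp_fps m - 1)) n"

end

theory Submission
  imports Defs "HOL-Probability.Distributions"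
begin

(* Write E = e_\<lambda>(t). Expanding exp (-x (E - 1)) in powers of x and integrating termwise
   against exp (-2x) turns the left-hand side into n! times the n-th coefficient of
   \<Sum>_i (1 - E)^i / 2^(i+1) = 1 / (E + 1). Since e_(\<lambda>/2)(2t) = E^2, the partial fraction
   decomposition t / (E + 1) = t / (E - 1) - 2t / (E^2 - 1) expresses this coefficient through
   the degenerate Bernoulli numbers for \<lambda> and \<lambda>/2. *)

lemma has_integral_exp_neg_mult_power:
  fixes a :: real and i :: nat
  assumes "0 < a"
  shows "((\<lambda>x. exp (- a * x) * x ^ i) has_integral fact i / a ^ (i + 1)) {0..}"
proof -
  define f where "f x = exponential_density a x * x ^ i" for x
  have "f \<in> borel_measurable borel"
    unfolding f_def by measurable
  moreover have "0 \<le> f x" for x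
    using assms by (simp add: f_def exponential_density_def)
  moreover have "(\<integral>\<^sup>+ x. ennreal (f x) \<partial>lborel) = ennreal (fact i / a ^ i)"
    unfolding f_def using nn_integral_erlang_ith_moment[OF assms, of 0 i] assms
    by (simp add: ennreal_power divide_ennreal)
  ultimately have "(f has_integral fact i / a ^ i) UNIV"
    using assms by (intro nn_integral_has_integral) simp_all
  moreover have "f = (\<lambda>x. if x \<in> {0..} then a * (exp (- a * x) * x ^ i) else 0)"
    by (auto simp: f_def exponential_density_def fun_eq_iff ac_simps)
  ultimately have "((\<lambda>x. if x \<in> {0..} then a * (exp (- a * x) * x ^ i) else 0)
                     has_integral fact i / a ^ i) UNIV"
    by simp
  then have "((\<lambda>x. a * (exp (- a * x) * x ^ i)) has_integral fact i / a ^ i) {0..}"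
    by (rule has_integral_restrict_UNIV[THEN iffD1])
  from has_integral_mult_right[OF this, of "1 / a"] assms show ?thesis
    by simp
qed

lemma has_integral_exp_neg_mult_polynomial:
  fixes a :: real and c :: "nat \<Rightarrow> real"
  assumes "0 < a" and "finite I"
  shows "((\<lambda>x. exp (- a * x) * (\<Sum>i\<in>I. c i * x ^ i)) has_integral
           (\<Sum>i\<in>I. c i * fact i / a ^ (i + 1))) {0..}"
proof -
  have "((\<lambda>x. \<Sum>i\<in>I. c i * (exp (- a * x) * x ^ i)) has_integral
          (\<Sum>i\<in>I. c i * (fact i / a ^ (i + 1)))) {0..}"
    using \<open>finite I\<close>
    by (intro has_integral_sum has_integral_mult_right has_integral_exp_neg_mult_power[OF \<open>0 < a\<close>])
  then show ?thesis
    by (simp add: sum_distrib_left ac_simps)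
qed

lemma fps_inverse_const_plus_X:
  fixes a :: "'a::field"
  assumes "a \<noteq> 0"
  shows "inverse (fps_const a + fps_X) = Abs_fps (\<lambda>i. (- 1) ^ i / a ^ (i + 1))"
proof (rule fps_inverse_unique)
  show "(fps_const a + fps_X) * Abs_fps (\<lambda>i. (- 1) ^ i / a ^ (i + 1)) = 1"
  proof (rule fps_ext)
    fix m
    show "fps_nth ((fps_const a + fps_X) * Abs_fps (\<lambda>i. (- 1) ^ i / a ^ (i + 1))) m = fps_nth 1 m"
      using assms by (cases m) (simp_all add: distrib_right)
  qed
qed

lemma fps_inverse_const_plus_nth:
  fixes a :: "'a::field" and D :: "'a fps"
  assumes "a \<noteq> 0" and "fps_nth D 0 = 0"
  shows "fps_nth (inverse (fps_const a + D)) n = (\<Sum>i=0..n. (- 1) ^ i / a ^ (i + 1) * fps_nth (D ^ i) n)"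
proof -
  have "fps_const a + D = (fps_const a + fps_X) oo D"
    using assms(2) by (simp add: fps_compose_add_distrib)
  then have "inverse (fps_const a + D) = inverse (fps_const a + fps_X) oo D"
    using fps_inverse_compose[OF assms(2), of "fps_const a + fps_X"] assms(1) by simp
  then show ?thesis
    using assms(1) by (simp add: fps_inverse_const_plus_X fps_compose_nth)
qed

lemma fps_partial_fractions_plus_one:
  fixes B C E :: "'a::field fps"
  assumes B: "B * (E - 1) = fps_X" and C: "C * (E ^ 2 - 1) = fps_const 2 * fps_X"
    and "E - 1 \<noteq> 0" and "fps_nth (E + 1) 0 \<noteq> 0"
  shows "B - C = fps_X * inverse (E + 1)"
proof -
  have "(B - C) * (E + 1) * (E - 1) = B * (E - 1) * (E + 1) - C * (E ^ 2 - 1)"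
    by (simp add: algebra_simps power2_eq_square)
  also have "\<dots> = fps_X * (E - 1)"
    by (simp only: B C) (simp add: algebra_simps mult_2 flip: numeral_fps_const)
  finally have "(B - C) * (E + 1) = fps_X"
    using \<open>E - 1 \<noteq> 0\<close> by (metis mult_cancel_right)
  then show ?thesis
    using inverse_mult_eq_1'[OF \<open>fps_nth (E + 1) 0 \<noteq> 0\<close>] by (metis mult.assoc mult_1_right)
qed

lemma deg_exp_fps_nth [simp]: "fps_nth (deg_exp_fps l) n = l ^ n * ((1 / l) gchoose n)"
  by (simp add: deg_exp_fps_def fps_compose_linear)

lemma deg_exp_fps_power_compose:
  "deg_exp_fps (l / of_nat k) oo (fps_const (of_nat k) * fps_X) = deg_exp_fps l ^ k"
proof -
  have "deg_exp_fps l ^ k = fps_binomial (of_nat k / l) oo (fps_const l * fps_X)"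
    by (simp add: deg_exp_fps_def fps_compose_power fps_binomial_power)
  then show ?thesis
    by (simp add: fps_compose_linear fps_eq_iff power_mult_distrib[symmetric] gbinomial_0_left)
qed

lemma deg_bell_eq_sum:
  "deg_bell n l x = fact n * (\<Sum>i=0..n. x ^ i / fact i * fps_nth ((deg_exp_fps l - 1) ^ i) n)"
  by (simp add: deg_bell_def fps_compose_nth)

definition deg_bernoulli_fps :: "real \<Rightarrow> real fps" where
  "deg_bernoulli_fps m = fps_X / (deg_exp_fps m - 1)"

lemma deg_bernoulli_eq_nth: "deg_bernoulli n m = fact n * fps_nth (deg_bernoulli_fps m) n"
  by (simp add: deg_bernoulli_def deg_bernoulli_fps_def)

lemma deg_exp_fps_minus_one_nonzero:
  assumes "m \<noteq> 0"
  shows "deg_exp_fps m - 1 \<noteq> 0" and "subdegree (deg_exp_fps m - 1) = 1"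
proof -
  have "fps_nth (deg_exp_fps m - 1) 1 \<noteq> 0" and "fps_nth (deg_exp_fps m - 1) 0 = 0"
    using assms by simp_all
  then show "deg_exp_fps m - 1 \<noteq> 0"
    by (metis fps_zero_nth)
  from \<open>fps_nth (deg_exp_fps m - 1) 1 \<noteq> 0\<close> show "subdegree (deg_exp_fps m - 1) = 1"
    by (rule subdegreeI) (simp add: \<open>fps_nth (deg_exp_fps m - 1) 0 = 0\<close>)
qed

lemma deg_bernoulli_fps_times:
  assumes "m \<noteq> 0"
  shows "deg_bernoulli_fps m * (deg_exp_fps m - 1) = fps_X"
  unfolding deg_bernoulli_fps_def
  using deg_exp_fps_minus_one_nonzero[OF assms] by (intro fps_times_divide_eq) simp_all

lemma deg_bernoulli_fps_compose_times:
  assumes "l \<noteq> 0" and "k \<noteq> 0"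
  shows "(deg_bernoulli_fps (l / of_nat k) oo (fps_const (of_nat k) * fps_X)) * (deg_exp_fps l ^ k - 1)
           = fps_const (of_nat k) * fps_X"
proof -
  have "(deg_bernoulli_fps (l / of_nat k) * (deg_exp_fps (l / of_nat k) - 1))
          oo (fps_const (of_nat k) * fps_X) = fps_const (of_nat k) * fps_X"
    using assms by (simp add: deg_bernoulli_fps_times)
  then show ?thesis
    using deg_exp_fps_power_compose[of l k]
    by (simp add: fps_compose_mult_distrib fps_compose_sub_distrib)
qed

lemma deg_bernoulli_difference:
  assumes "l \<noteq> 0"
  shows "(deg_bernoulli (n + 1) l - 2 ^ (n + 1) * deg_bernoulli (n + 1) (l / 2)) / real (n + 1)
           = fact n * fps_nth (inverse (fps_const 2 + (deg_exp_fps l - 1))) n"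
proof -
  have "deg_bernoulli_fps l - (deg_bernoulli_fps (l / 2) oo (fps_const 2 * fps_X))
          = fps_X * inverse (deg_exp_fps l + 1)"
    using assms
    using deg_bernoulli_fps_compose_times[OF assms, of 2]
    by (intro fps_partial_fractions_plus_one deg_bernoulli_fps_times deg_exp_fps_minus_one_nonzero)
       simp_all
  moreover have "deg_exp_fps l + 1 = fps_const 2 + (deg_exp_fps l - 1)"
    by (simp add: numeral_fps_const)
  ultimately have "fps_nth (deg_bernoulli_fps l - (deg_bernoulli_fps (l / 2) oo (fps_const 2 * fps_X))) (n + 1)
                     = fps_nth (fps_X * inverse (fps_const 2 + (deg_exp_fps l - 1))) (n + 1)"
    by simp
  then have "fps_nth (deg_bernoulli_fps l) (n + 1)
               - 2 ^ (n + 1) * fps_nth (deg_bernoulli_fps (l / 2)) (n + 1)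
               = fps_nth (inverse (fps_const 2 + (deg_exp_fps l - 1))) n"
    by (simp add: fps_compose_linear)
  then show ?thesis
    by (simp add: deg_bernoulli_eq_nth field_simps del: of_nat_Suc)
qed

theorem theorem12:
  fixes l :: real and n :: nat
  assumes "l \<noteq> 0"
  shows "((\<lambda>x. exp (-2 * x) * deg_bell n l (-x)) has_integral
           ((deg_bernoulli (n + 1) l - 2 ^ (n + 1) * deg_bernoulli (n + 1) (l / 2)) / real (n + 1)))
         {0..}"
proof -
  define D where "D = deg_exp_fps l - 1"
  define c where "c i = fact n * (- 1) ^ i / fact i * fps_nth (D ^ i) n" for i
  have bell: "deg_bell n l (- x) = (\<Sum>i=0..n. c i * x ^ i)" for x
    unfolding deg_bell_eq_sum D_def[symmetric] c_def sum_distrib_left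
    by (intro sum.cong refl) (simp add: power_minus[of x] ac_simps)
  have "(\<Sum>i=0..n. c i * fact i / 2 ^ (i + 1))
          = fact n * (\<Sum>i=0..n. (- 1) ^ i / 2 ^ (i + 1) * fps_nth (D ^ i) n)"
    unfolding c_def sum_distrib_left by (intro sum.cong refl) simp
  also have "\<dots> = fact n * fps_nth (inverse (fps_const 2 + D)) n"
    by (simp add: fps_inverse_const_plus_nth D_def)
  also have "\<dots> = (deg_bernoulli (n + 1) l - 2 ^ (n + 1) * deg_bernoulli (n + 1) (l / 2))
                        / real (n + 1)"
    unfolding D_def by (rule deg_bernoulli_difference[OF assms, symmetric])
  finally have moments: "(\<Sum>i=0..n. c i * fact i / 2 ^ (i + 1)) = \<dots>" .
  show ?thesis
    using has_integral_exp_neg_mult_polynomial[of 2 "{0..n}" c] unfolding bell moments by simp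
qed

end
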